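(* Let $p$ be a self-adjoint projection of $V$ and let $\Phi_0$ and $\Phi_\lambda$ be two distinct quadrics belonging to a projection pencil associated to $p$, generated by invertible self-adjoint transformations $g_0$ and $g_\lambda$ respectively. If $x$ is a common point of $\Phi_0$ and $\Phi_\lambda$, then $\langle p(g_0(x)),g_\lambda(x)\rangle=0$; i.e. the quadrics intersect orthogonally with respect to the quadratic form of $p$.
   Context: $V$ is a real vector space of dimension $n+1$ with a fixed indefinite inner product (nondegenerate symmetric bilinear form) $\langle\cdot,\cdot\rangle$. A linear map $g$ is self-adjoint if $\langle g(x),y\rangle=\langle x,g(y)\rangle$ for all $x,y$. A projection is a linear map $p$ with $p^2=p$. A quadric is the zero set in $P(V)$ of $x\mapsto\langle x,g(x)\rangle$ for a self-adjoint $g$ (generated by $g$); its dual is given by $g^{-1}$ when $g$ is invertible. A projection pencil associated to $p$ is a maximal set of quadrics whose dual self-adjoint transformations lie in a two-dimensional subspace of the space of linear maps of $V$ that contains $p$. *)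

theory Defs
  imports "HOL-Analysis.Analysis"
begin

text \<open>V is modelled as real^'n (dimension n+1 = CARD('n)); linear maps of V are
  matrices real^'n^'n acting by *v. The inner product is an abstract bilinear form B.\<close>

definition indefinite_inner_product :: "(real^'n \<Rightarrow> real^'n \<Rightarrow> real) \<Rightarrow> bool" where
  "indefinite_inner_product B \<longleftrightarrow>
     bilinear B \<and> (\<forall>x y. B x y = B y x) \<and>
     (\<forall>x. (\<forall>y. B x y = 0) \<longrightarrow> x = 0) \<and>
     (\<exists>u v. B u u > 0 \<and> B v v < 0)"

definition self_adjoint :: "(real^'n \<Rightarrow> real^'n \<Rightarrow> real) \<Rightarrow> real^'n^'n \<Rightarrow> bool" where
  "self_adjoint B g \<longleftrightarrow> (\<forall>x y. B (g *v x) y = B x (g *v y))"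

definition is_projection :: "real^'n^'n \<Rightarrow> bool" where
  "is_projection p \<longleftrightarrow> p ** p = p"

text \<open>The quadric generated by g: its zero set in P(V), represented by the cone of
  nonzero vectors x with B x (g x) = 0.\<close>
definition quadric :: "(real^'n \<Rightarrow> real^'n \<Rightarrow> real) \<Rightarrow> real^'n^'n \<Rightarrow> (real^'n) set" where
  "quadric B g = {x. x \<noteq> 0 \<and> B x (g *v x) = 0}"

definition dual_transformation :: "real^'n^'n \<Rightarrow> real^'n^'n" where
  "dual_transformation g = matrix_inv g"

text \<open>A projection pencil associated to p is determined by a two-dimensional subspace W of
  the space of linear maps containing p; it consists of all quadrics (generated by invertible
  self-adjoint g) whose dual transformation lies in W.\<close>
definition pencil_plane :: "real^'n^'n \<Rightarrow> (real^'n^'n) set \<Rightarrow> bool" where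
  "pencil_plane p W \<longleftrightarrow> subspace W \<and> dim W = 2 \<and> p \<in> W"

definition in_projection_pencil ::
  "(real^'n \<Rightarrow> real^'n \<Rightarrow> real) \<Rightarrow> (real^'n^'n) set \<Rightarrow> real^'n^'n \<Rightarrow> bool" where
  "in_projection_pencil B W g \<longleftrightarrow>
     invertible g \<and> self_adjoint B g \<and> dual_transformation g \<in> W"

end

theory Submission
  imports Defs
begin

text \<open>Write \<open>h\<^sub>0 = g\<^sub>0\<inverse>\<close> and \<open>h\<^sub>\<lambda> = g\<^sub>\<lambda>\<inverse>\<close>. If they are proportional, so are \<open>g\<^sub>0\<close> and
  \<open>g\<^sub>\<lambda>\<close> and the two quadrics coincide. Otherwise they span the pencil plane, so
  \<open>p = a h\<^sub>0 + b h\<^sub>\<lambda>\<close>, and then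
  \<open>\<langle>p g\<^sub>0 x, g\<^sub>\<lambda> x\<rangle> = a \<langle>x, g\<^sub>\<lambda> x\<rangle> + b \<langle>g\<^sub>0 x, h\<^sub>\<lambda> g\<^sub>\<lambda> x\<rangle> = a \<langle>x, g\<^sub>\<lambda> x\<rangle> + b \<langle>g\<^sub>0 x, x\<rangle>\<close>,
  which vanishes on the intersection of the quadrics.\<close>

lemma matrix_mul_matrix_inv:
  fixes g :: "real^'n^'n"
  assumes "invertible g"
  shows "g ** matrix_inv g = mat 1"
    and "matrix_inv g ** g = mat 1"
proof -
  from assms obtain A where "g ** A = mat 1 \<and> A ** g = mat 1"
    unfolding invertible_def by blast
  hence "g ** matrix_inv g = mat 1 \<and> matrix_inv g ** g = mat 1"
    unfolding matrix_inv_def by (rule someI)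
  thus "g ** matrix_inv g = mat 1" "matrix_inv g ** g = mat 1" by auto
qed

lemma mat_1_neq_0: "(mat 1 :: 'a::zero_neq_one^'n^'n) \<noteq> 0"
proof
  assume "(mat 1 :: 'a^'n^'n) = 0"
  hence "(mat 1 :: 'a^'n^'n) $ undefined $ undefined = 0" by simp
  thus False by (simp add: mat_def)
qed

lemma matrix_inv_neq_0:
  fixes g :: "real^'n^'n"
  assumes "invertible g"
  shows "matrix_inv g \<noteq> 0"
  using matrix_mul_matrix_inv(1)[OF assms] mat_1_neq_0 by force

lemma self_adjoint_matrix_inv:
  assumes "self_adjoint B g" and "invertible g"
  shows "self_adjoint B (matrix_inv g)"
  unfolding self_adjoint_def
proof (intro allI)
  fix u v
  let ?h = "matrix_inv g"
  have "B (?h *v u) v = B (?h *v u) (g *v (?h *v v))"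
    by (simp add: matrix_vector_mul_assoc matrix_mul_matrix_inv[OF assms(2)])
  also have "\<dots> = B (g *v (?h *v u)) (?h *v v)"
    using assms(1) unfolding self_adjoint_def by metis
  also have "\<dots> = B u (?h *v v)"
    by (simp add: matrix_vector_mul_assoc matrix_mul_matrix_inv[OF assms(2)])
  finally show "B (?h *v u) v = B u (?h *v v)" .
qed

lemma quadric_scaleR:
  assumes "bilinear B" and "c \<noteq> 0"
  shows "quadric B (c *\<^sub>R g) = quadric B g"
  using assms unfolding quadric_def
  by (auto simp: scaleR_matrix_vector_assoc[symmetric] bilinear_rmul)

lemma quadric_eq_if_matrix_inv_proportional:
  fixes g h :: "real^'n^'n"
  assumes "bilinear B" and "invertible g" and "invertible h"
    and "matrix_inv g \<in> span {matrix_inv h}"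
  shows "quadric B g = quadric B h"
proof -
  obtain k where k: "matrix_inv g = k *\<^sub>R matrix_inv h"
    using assms(4) unfolding span_singleton by auto
  have "k \<noteq> 0"
    using k matrix_inv_neq_0[OF assms(2)] by auto
  have "mat 1 = k *\<^sub>R (matrix_inv h ** g)"
    using matrix_mul_matrix_inv(2)[OF assms(2)] k
    by (simp add: scalar_matrix_assoc matrix_scalar_ac)
  hence "h ** mat 1 = k *\<^sub>R (h ** matrix_inv h ** g)"
    by (simp add: matrix_mul_assoc scalar_matrix_assoc matrix_scalar_ac)
  hence "h = k *\<^sub>R g"
    by (simp add: matrix_mul_matrix_inv[OF assms(3)])
  thus ?thesis
    using quadric_scaleR[OF assms(1) \<open>k \<noteq> 0\<close>] by simp
qed

lemma dim_2_subspace_eq_span_pair: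
  fixes W :: "'a::euclidean_space set"
  assumes "subspace W" and "dim W = 2" and "a \<in> W" and "b \<in> W"
    and "b \<noteq> 0" and "a \<notin> span {b}"
  shows "W \<subseteq> span {a, b}"
proof -
  have "independent {a, b}"
    using assms(5,6) by (intro independent_insertI) (auto simp: independent_empty)
  moreover have "a \<noteq> b"
    using assms(6) span_base by blast
  ultimately show ?thesis
    using card_ge_dim_independent[of "{a, b}" W] assms(2-4) by auto
qed

lemma subspace_left_annihilator:
  assumes "bilinear B"
  shows "subspace {q :: real^'n^'n. B (q *v u) w = 0}"
  using assms unfolding subspace_def
  by (simp add: matrix_vector_mult_add_rdistrib scaleR_matrix_vector_assoc[symmetric]
      bilinear_ladd bilinear_lmul bilinear_lzero)

lemma quadric_intersection_orthogonal_span_duals: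
  fixes g0 gl :: "real^'n^'n"
  assumes "bilinear B" and "\<And>u v. B u v = B v u"
    and "invertible g0" and "invertible gl" and "self_adjoint B gl"
    and "x \<in> quadric B g0" and "x \<in> quadric B gl"
    and "q \<in> span {matrix_inv g0, matrix_inv gl}"
  shows "B (q *v (g0 *v x)) (gl *v x) = 0"
proof -
  let ?Z = "{q. B (q *v (g0 *v x)) (gl *v x) = 0}"
  have "B (matrix_inv g0 *v (g0 *v x)) (gl *v x) = B x (gl *v x)"
    by (simp add: matrix_vector_mul_assoc matrix_mul_matrix_inv[OF assms(3)])
  hence "matrix_inv g0 \<in> ?Z"
    using assms(7) unfolding quadric_def by simp
  moreover have "B (matrix_inv gl *v (g0 *v x)) (gl *v x)
      = B (g0 *v x) (matrix_inv gl *v (gl *v x))"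
    using self_adjoint_matrix_inv[OF assms(5,4)] unfolding self_adjoint_def by blast
  hence "B (matrix_inv gl *v (g0 *v x)) (gl *v x) = B (g0 *v x) x"
    by (simp add: matrix_vector_mul_assoc matrix_mul_matrix_inv[OF assms(4)])
  hence "matrix_inv gl \<in> ?Z"
    using assms(2,6) unfolding quadric_def by simp
  ultimately have "span {matrix_inv g0, matrix_inv gl} \<subseteq> ?Z"
    by (intro span_minimal subspace_left_annihilator[OF assms(1)]) auto
  thus ?thesis using assms(8) by blast
qed

theorem mainTheorem2:
  fixes B :: "real^'n \<Rightarrow> real^'n \<Rightarrow> real"
    and p g0 gl :: "real^'n^'n" and W :: "(real^'n^'n) set" and x :: "real^'n"
  assumes "indefinite_inner_product B"
    and "self_adjoint B p" and "is_projection p"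
    and "pencil_plane p W"
    and "in_projection_pencil B W g0" and "in_projection_pencil B W gl"
    and "quadric B g0 \<noteq> quadric B gl"
    and "x \<in> quadric B g0" and "x \<in> quadric B gl"
  shows "B (p *v (g0 *v x)) (gl *v x) = 0"
proof -
  have bil: "bilinear B" and sym: "\<And>u v. B u v = B v u"
    using assms(1) unfolding indefinite_inner_product_def by auto
  have g0: "invertible g0" "matrix_inv g0 \<in> W"
    and gl: "invertible gl" "self_adjoint B gl" "matrix_inv gl \<in> W"
    using assms(5,6) unfolding in_projection_pencil_def dual_transformation_def by auto
  have "matrix_inv g0 \<notin> span {matrix_inv gl}"
    using quadric_eq_if_matrix_inv_proportional[OF bil g0(1) gl(1)] assms(7) by blast
  hence "W \<subseteq> span {matrix_inv g0, matrix_inv gl}"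
    using assms(4) g0(2) gl(3) matrix_inv_neq_0[OF gl(1)]
    unfolding pencil_plane_def by (intro dim_2_subspace_eq_span_pair) auto
  hence "p \<in> span {matrix_inv g0, matrix_inv gl}"
    using assms(4) unfolding pencil_plane_def by auto
  thus ?thesis
    using quadric_intersection_orthogonal_span_duals[OF bil sym g0(1) gl(1,2) assms(8,9)]
    by blast
qed

end
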